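(* Let $h>0$, $\alpha>2$, $p>0$, $\sigma^2>0$, and let $w_s,w_g:[0,\pi/2]\to[0,1]$ be continuous antenna patterns with $w_s(0)=w_g(0)=1$. For $\Delta>0$ and integers $i\equiv j\pmod 2$, let $\mathbf{s}^{\mathrm{reg}}_{i,j}=(i\Delta/2,\ j\Delta\sqrt3/2,\ h)$ (ground user at the origin), $\theta^{\mathrm{reg}}_{i,j}(\Delta)=\cos^{-1}\bigl(h/\|\mathbf{s}^{\mathrm{reg}}_{i,j}\|\bigr)$, $\mathcal{I}=\{(i,j)\in\mathbb{Z}^2: i\equiv j\ (\mathrm{mod}\ 2)\}\setminus\{(0,0)\}$, $$\gamma(p)=\frac{p}{\sigma^2}h^{-\alpha},\qquad \eta(p,\Delta)=\frac{p}{\sigma^2}\sum_{(i,j)\in\mathcal{I}}\|\mathbf{s}^{\mathrm{reg}}_{i,j}\|^{-\alpha}\,w_s\bigl(\theta^{\mathrm{reg}}_{i,j}(\Delta)\bigr)\,w_g\bigl(\theta^{\mathrm{reg}}_{i,j}(\Delta)\bigr),$$ and $$R^{\mathrm{reg}}(p,\Delta)=\frac{2}{\Delta^2\sqrt3}\log_2\!\left(1+\frac{\gamma(p)}{\eta(p,\Delta)+1}\right).$$ Then as $\Delta\to 0$, $R^{\mathrm{reg}}(p,\Delta)$ converges to a finite positive constant (depending on $p,\sigma^2,h,\alpha$ and the antenna patterns $w_s,w_g$).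
   Context: $R^{\mathrm{reg}}(p,\Delta)$ is the spectral efficiency (bits/s/Hz per unit area) of the regular configuration in the planar model: satellites on a hexagonal lattice with inter-satellite spacing $\Delta$ at altitude $h$, each serving a ground terminal directly below it, all antennas pointing vertically, all satellites transmitting at power spectral density $p$; $2/(\Delta^2\sqrt3)$ is the density of satellites per unit area. *)

theory Defs
  imports "HOL-Analysis.Analysis"
begin

definition sreg :: "real \<Rightarrow> real \<Rightarrow> int \<Rightarrow> int \<Rightarrow> real \<times> real \<times> real" where
  "sreg h \<Delta> i j = (real_of_int i * \<Delta> / 2, real_of_int j * \<Delta> * sqrt 3 / 2, h)"

definition norm3 :: "real \<times> real \<times> real \<Rightarrow> real" where
  "norm3 v = (case v of (x, y, z) \<Rightarrow> sqrt (x\<^sup>2 + y\<^sup>2 + z\<^sup>2))"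

definition theta_reg :: "real \<Rightarrow> real \<Rightarrow> int \<Rightarrow> int \<Rightarrow> real" where
  "theta_reg h \<Delta> i j = arccos (h / norm3 (sreg h \<Delta> i j))"

definition Iset :: "(int \<times> int) set" where
  "Iset = {(i, j). i mod 2 = j mod 2} - {(0, 0)}"

definition gamma_snr :: "real \<Rightarrow> real \<Rightarrow> real \<Rightarrow> real \<Rightarrow> real" where
  "gamma_snr \<sigma>2 h \<alpha> p = p / \<sigma>2 * h powr (- \<alpha>)"

definition eta_int ::
  "real \<Rightarrow> real \<Rightarrow> real \<Rightarrow> (real \<Rightarrow> real) \<Rightarrow> (real \<Rightarrow> real) \<Rightarrow> real \<Rightarrow> real \<Rightarrow> real" where
  "eta_int \<sigma>2 h \<alpha> ws wg p \<Delta> = p / \<sigma>2 *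
     (\<Sum>\<^sub>\<infinity>(i, j)\<in>Iset. norm3 (sreg h \<Delta> i j) powr (- \<alpha>)
         * ws (theta_reg h \<Delta> i j) * wg (theta_reg h \<Delta> i j))"

definition R_reg ::
  "real \<Rightarrow> real \<Rightarrow> real \<Rightarrow> (real \<Rightarrow> real) \<Rightarrow> (real \<Rightarrow> real) \<Rightarrow> real \<Rightarrow> real \<Rightarrow> real" where
  "R_reg \<sigma>2 h \<alpha> ws wg p \<Delta> = 2 / (\<Delta>\<^sup>2 * sqrt 3) *
     log 2 (1 + gamma_snr \<sigma>2 h \<alpha> p / (eta_int \<sigma>2 h \<alpha> ws wg p \<Delta> + 1))"

end

theory Submission
  imports Defs
begin

text \<open>
  Writing the hexagonal lattice as \<open>{(2m + n, n)}\<close>, the satellite of index \<open>(m, n)\<close> sits at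
  \<open>\<Delta>\<cdot>(m, n)\<close> in the oblique coordinates of the lattice, so \<open>\<Delta>\<^sup>2 \<eta>(p, \<Delta>) \<sigma>\<^sup>2/p\<close> is a
  Riemann sum of a fixed continuous density \<open>\<rho>\<close> over the grid \<open>\<Delta>\<int>\<^sup>2\<close> with the origin removed.
  Since \<open>\<alpha> > 2\<close>, \<open>\<rho>\<close> decays like \<open>|x|\<^sup>-\<^sup>\<alpha>\<close> and the step functions of these Riemann sums are
  dominated by a fixed integrable function, so by dominated convergence the sums tend to
  \<open>\<integral>\<rho> > 0\<close>. Hence \<open>\<eta>(p, \<Delta>) \<sim> (p/\<sigma>\<^sup>2) \<integral>\<rho> / \<Delta>\<^sup>2\<close>, the argument of the logarithm tends to
  \<open>1\<close>, \<open>log\<^sub>2(1 + u) \<sim> u / ln 2\<close>, and the factor \<open>\<Delta>\<^sup>-\<^sup>2\<close> cancels, leaving the limit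
  \<open>2\<gamma>(p) / (\<surd>3 ln 2 \<cdot> (p/\<sigma>\<^sup>2) \<integral>\<rho>)\<close>.
\<close>

section \<open>Riemann sums over a shrinking square grid\<close>

definition cell :: "real \<Rightarrow> real \<times> real \<Rightarrow> int \<times> int" where
  "cell d x = (\<lfloor>fst x / d\<rfloor>, \<lfloor>snd x / d\<rfloor>)"

lemma measurable_cell: "cell d \<in> borel \<rightarrow>\<^sub>M count_space UNIV"
proof -
  have "(\<lambda>x::real\<times>real. \<lfloor>fst x / d\<rfloor>) \<in> borel \<rightarrow>\<^sub>M count_space UNIV"
       "(\<lambda>x::real\<times>real. \<lfloor>snd x / d\<rfloor>) \<in> borel \<rightarrow>\<^sub>M count_space UNIV"
    unfolding divide_inverse
    by (intro measurable_compose[OF _ measurable_real_floor] borel_measurable_continuous_onI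
          continuous_intros)+
  then have "cell d \<in> borel \<rightarrow>\<^sub>M count_space UNIV \<Otimes>\<^sub>M count_space UNIV"
    unfolding cell_def by (rule measurable_Pair)
  then show ?thesis by (simp add: pair_measure_countable)
qed

lemma cell_eq_iff:
  assumes "0 < d"
  shows "cell d x = k \<longleftrightarrow>
    x \<in> {of_int (fst k) * d ..< (of_int (fst k) + 1) * d} \<times> {of_int (snd k) * d ..< (of_int (snd k) + 1) * d}"
  using assms unfolding cell_def by (cases x; cases k) (auto simp: floor_eq_iff field_simps)

lemma nn_integral_cell_step:
  fixes g :: "int \<times> int \<Rightarrow> ennreal"
  assumes d: "0 < d"
  shows "(\<integral>\<^sup>+x. g (cell d x) \<partial>lborel) = ennreal (d\<^sup>2) * (\<integral>\<^sup>+k. g k \<partial>count_space UNIV)"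
proof -
  define C where "C k = {of_int (fst k) * d ..< (of_int (fst k) + 1) * d}
      \<times> {of_int (snd k) * d ..< (of_int (snd k) + 1) * d}" for k :: "int \<times> int"
  have ind: "indicator (C k) x = (indicator {cell d x} k :: ennreal)" for x k
    using cell_eq_iff[OF d, of x k] by (auto simp: C_def split: split_indicator)
  have C_measure: "emeasure lborel (C k) = ennreal (d\<^sup>2)" for k
    using d unfolding C_def lborel_prod[symmetric]
    by (subst sigma_finite_measure.emeasure_pair_measure_Times)
       (auto simp: power2_eq_square algebra_simps ennreal_mult sigma_finite_lborel)
  interpret pair_sigma_finite "count_space (UNIV :: (int \<times> int) set)" "lborel :: (real \<times> real) measure"
    by (intro pair_sigma_finite.intro sigma_finite_measure_count_space_countable sigma_finite_lborel) auto
  have meas: "(\<lambda>p. g (fst p) * indicator (C (fst p)) (snd p)) \<in> borel_measurable (count_space UNIV \<Otimes>\<^sub>M lborel)"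
    unfolding ind using measurable_cell[of d] by (auto simp: indicator_def)
  have "(\<integral>\<^sup>+x. (\<integral>\<^sup>+k. g k * indicator (C k) x \<partial>count_space UNIV) \<partial>lborel)
      = (\<integral>\<^sup>+k. (\<integral>\<^sup>+x. g k * indicator (C k) x \<partial>lborel) \<partial>count_space UNIV)"
    using Fubini[OF meas] by simp
  moreover have "(\<integral>\<^sup>+k. g k * indicator (C k) x \<partial>count_space UNIV) = g (cell d x)" for x
    by (simp add: ind)
  moreover have "(\<integral>\<^sup>+x. g k * indicator (C k) x \<partial>lborel) = g k * ennreal (d\<^sup>2)" for k
  proof -
    have "C k \<in> sets lborel" by (simp add: C_def flip: lborel_prod)
    then show ?thesis by (simp add: C_measure nn_integral_cmult_indicator)
  qed
  ultimately show ?thesis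
    by (simp add: nn_integral_multc mult.commute)
qed

lemma integral_cell_step:
  fixes g :: "int \<times> int \<Rightarrow> real"
  assumes d: "0 < d" and nonneg: "\<And>k. 0 \<le> g k" and int: "integrable lborel (\<lambda>x. g (cell d x))"
  shows "integral\<^sup>L lborel (\<lambda>x. g (cell d x)) = d\<^sup>2 * (\<Sum>\<^sub>\<infinity>k. g k)"
proof -
  have step: "ennreal (integral\<^sup>L lborel (\<lambda>x. g (cell d x))) = ennreal (d\<^sup>2) * (\<integral>\<^sup>+k. g k \<partial>count_space UNIV)"
    using int nonneg nn_integral_cell_step[OF d, of "\<lambda>k. ennreal (g k)"]
    by (simp add: nn_integral_eq_integral)
  then have "ennreal (d\<^sup>2) * (\<integral>\<^sup>+k. g k \<partial>count_space UNIV) < \<infinity>"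
    by (simp flip: step)
  then have "(\<integral>\<^sup>+k. g k \<partial>count_space UNIV) < \<infinity>"
    using d by (auto simp: ennreal_mult_less_top)
  then have g_int: "integrable (count_space UNIV) g"
    using nonneg by (intro integrableI_nonneg) auto
  then have "(\<Sum>\<^sub>\<infinity>k. g k) = integral\<^sup>L (count_space UNIV) g"
    using infsetsum_infsum[of g UNIV] by (simp add: abs_summable_on_def infsetsum_def)
  then have "(\<integral>\<^sup>+k. g k \<partial>count_space UNIV) = ennreal (\<Sum>\<^sub>\<infinity>k. g k)"
    using g_int nonneg by (simp add: nn_integral_eq_integral)
  with step have "ennreal (integral\<^sup>L lborel (\<lambda>x. g (cell d x))) = ennreal (d\<^sup>2 * (\<Sum>\<^sub>\<infinity>k. g k))"
    using nonneg by (simp add: ennreal_mult' infsum_nonneg)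
  moreover have "0 \<le> integral\<^sup>L lborel (\<lambda>x. g (cell d x))" using nonneg by simp
  moreover have "0 \<le> d\<^sup>2 * (\<Sum>\<^sub>\<infinity>k. g k)" using nonneg by (simp add: infsum_nonneg)
  ultimately show ?thesis by simp
qed

lemma scaled_floor_bounds:
  fixes x d :: real
  assumes "0 < d"
  shows "x - d < d * \<lfloor>x / d\<rfloor>" and "d * \<lfloor>x / d\<rfloor> \<le> x"
proof -
  have "d * (x / d - 1) < d * \<lfloor>x / d\<rfloor>" "d * \<lfloor>x / d\<rfloor> \<le> d * (x / d)"
    using assms by (intro mult_strict_left_mono mult_left_mono; linarith)+
  then show "x - d < d * \<lfloor>x / d\<rfloor>" "d * \<lfloor>x / d\<rfloor> \<le> x"
    using assms by (simp_all add: algebra_simps)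
qed

lemma scaled_floor_tendsto:
  fixes x :: real
  assumes "(d \<longlongrightarrow> 0) F" and "\<forall>\<^sub>F t in F. 0 < d t"
  shows "((\<lambda>t. d t * \<lfloor>x / d t\<rfloor>) \<longlongrightarrow> x) F"
proof (rule tendsto_sandwich[where f = "\<lambda>t. x - d t" and h = "\<lambda>_. x"])
  show "\<forall>\<^sub>F t in F. x - d t \<le> d t * \<lfloor>x / d t\<rfloor>" "\<forall>\<^sub>F t in F. d t * \<lfloor>x / d t\<rfloor> \<le> x"
    using assms(2) by (eventually_elim, use scaled_floor_bounds in \<open>auto intro: less_imp_le\<close>)+
  show "((\<lambda>t. x - d t) \<longlongrightarrow> x) F"
    using tendsto_diff[OF tendsto_const assms(1)] by simp
qed simp

lemma scaled_floor_eventually_nonzero: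
  fixes x :: real
  assumes "(d \<longlongrightarrow> 0) F" and "\<forall>\<^sub>F t in F. 0 < d t" and "x \<noteq> 0"
  shows "\<forall>\<^sub>F t in F. \<lfloor>x / d t\<rfloor> \<noteq> 0"
proof (cases "0 < x")
  case True
  with assms(1,2) have "\<forall>\<^sub>F t in F. 0 < d t \<and> d t < x"
    by (simp add: eventually_conj_iff order_tendstoD(2))
  then show ?thesis
    by eventually_elim (simp add: floor_eq_iff)
next
  case False
  from assms(2) show ?thesis
    by eventually_elim (use False assms(3) in \<open>auto simp: floor_eq_iff divide_less_0_iff zero_le_divide_iff\<close>)
qed

definition lattice_sample :: "(real \<times> real \<Rightarrow> real) \<Rightarrow> real \<Rightarrow> int \<times> int \<Rightarrow> real" where
  "lattice_sample f d k = (if k = (0, 0) then 0 else f (d * of_int (fst k), d * of_int (snd k)))"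

lemma lattice_sample_cell_tendsto:
  assumes "isCont f x" and "x \<noteq> (0, 0)" and "(d \<longlongrightarrow> 0) F" and "\<forall>\<^sub>F t in F. 0 < d t"
  shows "((\<lambda>t. lattice_sample f (d t) (cell (d t) x)) \<longlongrightarrow> f x) F"
proof -
  have "\<forall>\<^sub>F t in F. cell (d t) x \<noteq> (0, 0)"
  proof (cases "fst x = 0")
    case True
    with assms(2) have "snd x \<noteq> 0" by (cases x) auto
    from scaled_floor_eventually_nonzero[OF assms(3,4) this] show ?thesis
      by eventually_elim (simp add: cell_def)
  next
    case False
    from scaled_floor_eventually_nonzero[OF assms(3,4) this] show ?thesis
      by eventually_elim (simp add: cell_def)
  qed
  then have "\<forall>\<^sub>F t in F. f (d t * \<lfloor>fst x / d t\<rfloor>, d t * \<lfloor>snd x / d t\<rfloor>) = lattice_sample f (d t) (cell (d t) x)"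
    by eventually_elim (auto simp: lattice_sample_def cell_def)
  moreover have "((\<lambda>t. f (d t * \<lfloor>fst x / d t\<rfloor>, d t * \<lfloor>snd x / d t\<rfloor>)) \<longlongrightarrow> f x) F"
  proof -
    have "((\<lambda>t. (d t * \<lfloor>fst x / d t\<rfloor>, d t * \<lfloor>snd x / d t\<rfloor>)) \<longlongrightarrow> (fst x, snd x)) F"
      using assms(3,4) by (intro tendsto_Pair scaled_floor_tendsto)
    from isCont_tendsto_compose[OF _ this] assms(1) show ?thesis by simp
  qed
  ultimately show ?thesis
    by (rule Lim_transform_eventually[rotated])
qed

lemma riemann_sum_tendsto_integral:
  fixes f w :: "real \<times> real \<Rightarrow> real"
  assumes cont: "continuous_on UNIV f" and nonneg: "\<And>x. 0 \<le> f x"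
    and w: "integrable lborel w"
    and dom: "\<And>d x. 0 < d \<Longrightarrow> d \<le> 1 \<Longrightarrow> lattice_sample f d (cell d x) \<le> w x"
  shows "integrable lborel f"
    and "((\<lambda>d. d\<^sup>2 * (\<Sum>\<^sub>\<infinity>k. lattice_sample f d k)) \<longlongrightarrow> integral\<^sup>L lborel f) (at_right 0)"
proof -
  define s where "s t x = lattice_sample f (inverse t) (cell (inverse t) x)" for t x
  have sample_nonneg: "0 \<le> lattice_sample f d k" for d k
    by (simp add: lattice_sample_def nonneg)
  have s_meas: "s t \<in> borel_measurable lborel" for t
    unfolding s_def using measurable_compose[OF measurable_cell, of "lattice_sample f (inverse t)" borel]
    by simp
  have f_meas: "f \<in> borel_measurable lborel"
    using borel_measurable_continuous_onI[OF cont] by simp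
  have lim: "AE x in lborel. ((\<lambda>t. s t x) \<longlongrightarrow> f x) at_top"
    using AE_lborel_singleton[of "(0, 0)"]
  proof eventually_elim
    case (elim x)
    have "\<forall>\<^sub>F t in at_top. 0 < inverse (t::real)"
      using eventually_gt_at_top[of 0] by eventually_elim simp
    with elim show ?case
      unfolding s_def using cont
      by (intro lattice_sample_cell_tendsto tendsto_inverse_0_at_top filterlim_ident)
         (auto simp: continuous_on_eq_continuous_at simp del: split_paired_All)
  qed
  have ev_ge_1: "\<forall>\<^sub>F t in at_top. (1::real) \<le> t"
    by (rule eventually_ge_at_top)
  have bound: "\<forall>\<^sub>F t in at_top. AE x in lborel. norm (s t x) \<le> w x"
    using ev_ge_1 by eventually_elim (simp add: s_def dom sample_nonneg inverse_le_1_iff)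
  show "integrable lborel f"
    using integrable_dominated_convergence_at_top[OF f_meas s_meas w lim bound] .
  have "((\<lambda>t. integral\<^sup>L lborel (s t)) \<longlongrightarrow> integral\<^sup>L lborel f) at_top"
    using integral_dominated_convergence_at_top[OF f_meas s_meas w lim bound] .
  moreover have "\<forall>\<^sub>F t in at_top. integral\<^sup>L lborel (s t)
      = (inverse t)\<^sup>2 * (\<Sum>\<^sub>\<infinity>k. lattice_sample f (inverse t) k)"
    using ev_ge_1
  proof eventually_elim
    case (elim t)
    then have d: "0 < inverse t" "inverse t \<le> 1" by (auto simp: inverse_le_1_iff)
    have "integrable lborel (s t)"
      using w s_meas by (rule Bochner_Integration.integrable_bound)
        (auto simp: s_def sample_nonneg intro!: AE_I2 order_trans[OF dom[OF d] abs_ge_self])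
    then show ?case
      unfolding s_def by (rule integral_cell_step[OF d(1) sample_nonneg])
  qed
  ultimately show "((\<lambda>d. d\<^sup>2 * (\<Sum>\<^sub>\<infinity>k. lattice_sample f d k)) \<longlongrightarrow> integral\<^sup>L lborel f) (at_right 0)"
    unfolding filterlim_at_right_to_top by (rule Lim_transform_eventually)
qed

lemma integral_pos_if_continuous_at_pos:
  fixes f :: "'a::euclidean_space \<Rightarrow> real"
  assumes cont: "continuous_on UNIV f" and nonneg: "\<And>x. 0 \<le> f x"
    and int: "integrable lborel f" and pos: "0 < f x\<^sub>0"
  shows "0 < integral\<^sup>L lborel f"
proof -
  have "open {x. f x\<^sub>0 / 2 < f x}"
    by (rule open_Collect_less[OF continuous_on_const cont])
  moreover have "x\<^sub>0 \<in> {x. f x\<^sub>0 / 2 < f x}" using pos by simp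
  ultimately obtain e where e: "0 < e" "ball x\<^sub>0 e \<subseteq> {x. f x\<^sub>0 / 2 < f x}"
    by (meson open_contains_ball)
  have ball_int: "integrable lborel (\<lambda>x. f x\<^sub>0 / 2 * indicator (ball x\<^sub>0 e) x)"
    using emeasure_lborel_ball_finite by (intro integrable_mult_right integrable_real_indicator) auto
  have "0 < f x\<^sub>0 / 2 * measure lborel (ball x\<^sub>0 e)"
    using pos e(1) by simp
  also have "\<dots> = integral\<^sup>L lborel (\<lambda>x. f x\<^sub>0 / 2 * indicator (ball x\<^sub>0 e) x)"
    by simp
  also have "\<dots> \<le> integral\<^sup>L lborel f"
    using e(2) pos nonneg
    by (intro integral_mono[OF ball_int int]) (auto split: split_indicator)
  finally show ?thesis .
qed

section \<open>An integrable majorant for inverse-power decay\<close>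

lemma integrable_lborel_product:
  fixes f g :: "real \<Rightarrow> real"
  assumes f: "integrable lborel f" and g: "integrable lborel g"
  shows "integrable lborel (\<lambda>x::real \<times> real. f (fst x) * g (snd x))"
proof -
  have "integrable (lborel \<Otimes>\<^sub>M lborel) (\<lambda>x::real \<times> real. f (fst x) * g (snd x))"
  proof (rule lborel_pair.Fubini_integrable)
    show "(\<lambda>x. f (fst x) * g (snd x)) \<in> borel_measurable (lborel \<Otimes>\<^sub>M lborel)"
      using f g by measurable
    show "integrable lborel (\<lambda>x. \<integral>y. norm (f (fst (x, y)) * g (snd (x, y))) \<partial>lborel)"
      using f g by (simp add: abs_mult)
    show "AE x in lborel. integrable lborel (\<lambda>y. f (fst (x, y)) * g (snd (x, y)))"
      using g by simp
  qed
  then show ?thesis by (simp add: lborel_prod)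
qed

lemma integrable_powr_tail:
  fixes a b :: real
  assumes "0 < a" and "1 < b"
  shows "integrable lborel (\<lambda>t. t powr (-b) * indicator {a..} t)"
proof (rule integrableI_nonneg)
  show "(\<lambda>t. t powr (-b) * indicator {a..} t) \<in> borel_measurable lborel"
    by measurable
  show "AE t in lborel. 0 \<le> t powr (-b) * indicator {a..} t"
    by simp
  have "((\<lambda>t. t powr (-b)) has_integral - (a powr (-b + 1)) / (-b + 1)) {a..}"
    using assms by (intro has_integral_powr_to_inf) auto
  then have "(\<integral>\<^sup>+t. ennreal (t powr (-b)) * indicator {a..} t \<partial>lborel) = ennreal (- (a powr (-b + 1)) / (-b + 1))"
    by (intro nn_integral_has_integral_lebesgue') auto
  then show "(\<integral>\<^sup>+t. ennreal (t powr (-b) * indicator {a..} t) \<partial>lborel) < \<infinity>"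
    by (simp add: indicator_mult_ennreal mult.commute)
qed

definition decay_majorant :: "real \<Rightarrow> real \<Rightarrow> real \<Rightarrow> real" where
  "decay_majorant c b t = (if \<bar>t\<bar> \<le> 2 then c powr (-b/2) else 8 powr (b/2) * \<bar>t\<bar> powr (-b))"

lemma decay_majorant_nonneg: "0 \<le> decay_majorant c b t"
  by (simp add: decay_majorant_def)

lemma integrable_decay_majorant:
  assumes "1 < b"
  shows "integrable lborel (decay_majorant c b)"
proof -
  define tail where "tail t = \<bar>t\<bar> powr (-b) * indicator {2..} t" for t :: real
  have "tail = (\<lambda>t. t powr (-b) * indicator {2..} t)"
    by (auto simp: tail_def fun_eq_iff split: split_indicator)
  then have tail: "integrable lborel tail"
    using integrable_powr_tail[of 2 b] assms by simp
  have "integrable lborel (\<lambda>t. tail (- t))"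
    using lborel_integrable_real_affine[OF tail, of "-1" 0] by simp
  with tail have tails: "integrable lborel (\<lambda>t. tail t + tail (- t))"
    by (rule Bochner_Integration.integrable_add)
  have "integrable lborel (\<lambda>t. c powr (-b/2) * indicator {-2..2} t + 8 powr (b/2) * (tail t + tail (- t)))"
    by (intro Bochner_Integration.integrable_add integrable_mult_right integrable_real_indicator tails) auto
  then show ?thesis
  proof (rule Bochner_Integration.integrable_bound)
    show "decay_majorant c b \<in> borel_measurable lborel"
      unfolding decay_majorant_def by measurable
    show "AE t in lborel. norm (decay_majorant c b t)
        \<le> norm (c powr (-b/2) * indicator {-2..2} t + 8 powr (b/2) * (tail t + tail (- t)))"
      by (intro AE_I2) (auto simp: decay_majorant_def tail_def split: split_indicator)
  qed
qed

lemma powr_add_le_powr_mult: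
  fixes P Q b :: real
  assumes "0 < P" "0 < Q" "0 \<le> b"
  shows "(P + Q) powr (-b) \<le> P powr (-b/2) * Q powr (-b/2)"
proof -
  have "sqrt (P * Q) \<le> (P + Q) / 2"
    using assms by (intro arith_geo_mean_sqrt) auto
  also have "\<dots> \<le> P + Q"
    using assms by simp
  finally have "(P + Q) powr (-b) \<le> sqrt (P * Q) powr (-b)"
    using assms by (intro powr_mono2') auto
  also have "\<dots> = P powr (-b/2) * Q powr (-b/2)"
    using assms by (simp add: powr_half_sqrt[symmetric] powr_powr powr_mult)
  finally show ?thesis .
qed

lemma decay_le_majorant:
  fixes c b t :: real
  assumes c: "0 < c" and b: "0 \<le> b"
  shows "((max 0 (\<bar>t\<bar> - 1))\<^sup>2 / 2 + c) powr (-b/2) \<le> decay_majorant c b t"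
proof (cases "\<bar>t\<bar> \<le> 2")
  case True
  then show ?thesis
    using assms by (simp add: decay_majorant_def, intro powr_mono2') auto
next
  case False
  have "(\<bar>t\<bar> / 2)\<^sup>2 \<le> (\<bar>t\<bar> - 1)\<^sup>2"
    using False by (intro power_mono) auto
  then have le: "\<bar>t\<bar>\<^sup>2 / 8 \<le> (max 0 (\<bar>t\<bar> - 1))\<^sup>2 / 2 + c"
    using False c by (simp add: max_def power_divide)
  have "((max 0 (\<bar>t\<bar> - 1))\<^sup>2 / 2 + c) powr (-b/2) \<le> (\<bar>t\<bar>\<^sup>2 / 8) powr (-b/2)"
    using le False b by (intro powr_mono2') auto
  also have "\<dots> = 8 powr (b/2) * (\<bar>t\<bar> powr 2) powr (-b/2)"
    using False by (simp add: powr_divide powr_minus_divide powr_realpow)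
  also have "\<dots> = 8 powr (b/2) * \<bar>t\<bar> powr (-b)"
    by (simp only: powr_powr) simp
  finally show ?thesis
    using False by (simp add: decay_majorant_def)
qed

lemma decay_le_majorant_product:
  fixes c b :: real and x y :: "real \<times> real"
  assumes c: "0 < c" and b: "0 \<le> b"
    and near: "\<bar>fst x\<bar> - 1 \<le> \<bar>fst y\<bar>" "\<bar>snd x\<bar> - 1 \<le> \<bar>snd y\<bar>"
  shows "(((fst y)\<^sup>2 + (snd y)\<^sup>2) / 2 + 2 * c) powr (-b)
    \<le> decay_majorant c b (fst x) * decay_majorant c b (snd x)"
proof -
  define P where "P = (max 0 (\<bar>fst x\<bar> - 1))\<^sup>2 / 2 + c"
  define Q where "Q = (max 0 (\<bar>snd x\<bar> - 1))\<^sup>2 / 2 + c"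
  have PQ: "0 < P" "0 < Q"
    using c by (simp_all add: P_def Q_def add_nonneg_pos)
  have "(max 0 (\<bar>fst x\<bar> - 1))\<^sup>2 \<le> (fst y)\<^sup>2" "(max 0 (\<bar>snd x\<bar> - 1))\<^sup>2 \<le> (snd y)\<^sup>2"
    using near by (simp_all add: power_mono flip: abs_le_square_iff)
  then have "P + Q \<le> ((fst y)\<^sup>2 + (snd y)\<^sup>2) / 2 + 2 * c"
    by (simp add: P_def Q_def)
  then have "(((fst y)\<^sup>2 + (snd y)\<^sup>2) / 2 + 2 * c) powr (-b) \<le> (P + Q) powr (-b)"
    using PQ b by (intro powr_mono2') auto
  also have "\<dots> \<le> P powr (-b/2) * Q powr (-b/2)"
    using PQ b by (rule powr_add_le_powr_mult)
  also have "\<dots> \<le> decay_majorant c b (fst x) * decay_majorant c b (snd x)"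
    unfolding P_def Q_def using c b
    by (intro mult_mono decay_le_majorant) (auto simp: decay_majorant_nonneg)
  finally show ?thesis .
qed

section \<open>The hexagonal constellation\<close>

text \<open>\<open>hex_dist h (\<Delta> m, \<Delta> n)\<close> is the distance from the user to the satellite
  \<open>sreg h \<Delta> (2m + n) n\<close>, see \<open>norm3_sreg_hex\<close>.\<close>

definition hex_dist :: "real \<Rightarrow> real \<times> real \<Rightarrow> real" where
  "hex_dist h x = norm3 (fst x + snd x / 2, snd x * sqrt 3 / 2, h)"

definition off_axis_angle :: "real \<Rightarrow> real \<times> real \<Rightarrow> real" where
  "off_axis_angle h x = arccos (h / hex_dist h x)"

definition interference_density ::
  "real \<Rightarrow> real \<Rightarrow> (real \<Rightarrow> real) \<Rightarrow> (real \<Rightarrow> real) \<Rightarrow> real \<times> real \<Rightarrow> real" where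
  "interference_density h \<alpha> ws wg x =
     hex_dist h x powr (-\<alpha>) * ws (off_axis_angle h x) * wg (off_axis_angle h x)"

lemma hex_form_ge:
  fixes x :: "real \<times> real"
  shows "((fst x)\<^sup>2 + (snd x)\<^sup>2) / 2 \<le> (fst x)\<^sup>2 + fst x * snd x + (snd x)\<^sup>2"
proof -
  have "0 \<le> (fst x + snd x)\<^sup>2 / 2" by simp
  then show ?thesis
    by (simp add: power2_eq_square algebra_simps)
qed

lemma hex_dist_sq: "(hex_dist h x)\<^sup>2 = (fst x)\<^sup>2 + fst x * snd x + (snd x)\<^sup>2 + h\<^sup>2"
proof -
  have "(fst x + snd x / 2)\<^sup>2 + (snd x * sqrt 3 / 2)\<^sup>2 = (fst x)\<^sup>2 + fst x * snd x + (snd x)\<^sup>2"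
    by (simp add: power2_eq_square algebra_simps)
  moreover have "0 \<le> (fst x)\<^sup>2 + fst x * snd x + (snd x)\<^sup>2"
    using hex_form_ge[of x] by (smt (verit) zero_le_power2 divide_nonneg_nonneg)
  ultimately show ?thesis
    by (simp add: hex_dist_def norm3_def)
qed

lemma hex_dist_sq_ge: "((fst x)\<^sup>2 + (snd x)\<^sup>2) / 2 + h\<^sup>2 \<le> (hex_dist h x)\<^sup>2"
  using hex_form_ge[of x] by (simp add: hex_dist_sq)

lemma hex_dist_ge: "h \<le> hex_dist h x"
proof -
  have "h\<^sup>2 \<le> (hex_dist h x)\<^sup>2"
    using hex_dist_sq_ge[of x h] by (smt (verit) zero_le_power2 divide_nonneg_nonneg)
  moreover have "0 \<le> hex_dist h x"
    by (simp add: hex_dist_def norm3_def)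
  ultimately show ?thesis
    by (rule power2_le_imp_le)
qed

lemma continuous_on_hex_dist: "continuous_on UNIV (hex_dist h)"
  unfolding hex_dist_def norm3_def by (simp, intro continuous_intros) auto

lemma off_axis_angle_range:
  assumes "0 < h" shows "off_axis_angle h x \<in> {0..pi/2}"
proof -
  have "0 \<le> h / hex_dist h x" "h / hex_dist h x \<le> 1"
    using hex_dist_ge[of h x] assms by auto
  then have "0 \<le> arccos (h / hex_dist h x)" "arccos (h / hex_dist h x) \<le> pi/2"
    by (intro arccos_lbound arccos_le_pi2; linarith)+
  then show ?thesis
    by (simp add: off_axis_angle_def)
qed

lemma continuous_on_off_axis_angle:
  assumes "0 < h" shows "continuous_on UNIV (off_axis_angle h)"
proof -
  have pos: "0 < hex_dist h x" for x
    using hex_dist_ge[of h x] assms by linarith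
  have "hex_dist h x \<noteq> 0" "-1 \<le> h / hex_dist h x" "h / hex_dist h x \<le> 1" for x
    using hex_dist_ge[of h x] pos[of x] assms by (auto simp: field_simps)
  then show ?thesis
    unfolding off_axis_angle_def by (intro continuous_intros continuous_on_hex_dist) auto
qed

context
  fixes h \<alpha> :: real and ws wg :: "real \<Rightarrow> real"
  assumes h: "0 < h"
    and ws: "\<forall>t\<in>{0..pi/2}. 0 \<le> ws t \<and> ws t \<le> 1"
    and wg: "\<forall>t\<in>{0..pi/2}. 0 \<le> wg t \<and> wg t \<le> 1"
begin

lemma antenna_gain_bounds:
  "0 \<le> ws (off_axis_angle h x) * wg (off_axis_angle h x)"
  "ws (off_axis_angle h x) * wg (off_axis_angle h x) \<le> 1"
proof -
  have "off_axis_angle h x \<in> {0..pi/2}"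
    using h by (rule off_axis_angle_range)
  with ws wg show "0 \<le> ws (off_axis_angle h x) * wg (off_axis_angle h x)"
    "ws (off_axis_angle h x) * wg (off_axis_angle h x) \<le> 1"
    by (auto intro: mult_le_one)
qed

lemma interference_density_nonneg: "0 \<le> interference_density h \<alpha> ws wg x"
  using antenna_gain_bounds(1)[of x] by (simp add: interference_density_def mult.assoc)

lemma interference_density_le:
  assumes "0 \<le> \<alpha>"
  shows "interference_density h \<alpha> ws wg x \<le> (((fst x)\<^sup>2 + (snd x)\<^sup>2) / 2 + h\<^sup>2) powr (-\<alpha>/2)"
proof -
  have pos: "0 < ((fst x)\<^sup>2 + (snd x)\<^sup>2) / 2 + h\<^sup>2"
    using h by (simp add: add_nonneg_pos)
  have "interference_density h \<alpha> ws wg x \<le> hex_dist h x powr (-\<alpha>)"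
    using antenna_gain_bounds[of x] by (simp add: interference_density_def mult.assoc mult_left_le)
  also have "\<dots> = (hex_dist h x powr 2) powr (-\<alpha>/2)"
    by (simp only: powr_powr) simp
  also have "\<dots> = ((hex_dist h x)\<^sup>2) powr (-\<alpha>/2)"
    using hex_dist_ge[of h x] h by (simp add: powr_realpow)
  also have "\<dots> \<le> (((fst x)\<^sup>2 + (snd x)\<^sup>2) / 2 + h\<^sup>2) powr (-\<alpha>/2)"
    using hex_dist_sq_ge[of x h] pos assms by (intro powr_mono2') auto
  finally show ?thesis .
qed

lemma lattice_sample_interference_le_majorant:
  assumes "0 \<le> \<alpha>" and d: "0 < d" "d \<le> 1"
  shows "lattice_sample (interference_density h \<alpha> ws wg) d (cell d x)
    \<le> decay_majorant (h\<^sup>2/2) (\<alpha>/2) (fst x) * decay_majorant (h\<^sup>2/2) (\<alpha>/2) (snd x)"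
proof (cases "cell d x = (0, 0)")
  case True
  then show ?thesis
    by (simp add: lattice_sample_def decay_majorant_nonneg)
next
  case False
  define y where "y = (d * \<lfloor>fst x / d\<rfloor>, d * \<lfloor>snd x / d\<rfloor>)"
  have near: "\<bar>fst x\<bar> - 1 \<le> \<bar>fst y\<bar>" "\<bar>snd x\<bar> - 1 \<le> \<bar>snd y\<bar>"
    using scaled_floor_bounds[OF d(1), of "fst x"] scaled_floor_bounds[OF d(1), of "snd x"] d(2)
    by (auto simp: y_def)
  have "lattice_sample (interference_density h \<alpha> ws wg) d (cell d x) = interference_density h \<alpha> ws wg y"
    using False by (auto simp: lattice_sample_def cell_def y_def)
  also have "\<dots> \<le> (((fst y)\<^sup>2 + (snd y)\<^sup>2) / 2 + 2 * (h\<^sup>2/2)) powr (-(\<alpha>/2))"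
    using interference_density_le[OF assms(1), of y] by simp
  also have "\<dots> \<le> decay_majorant (h\<^sup>2/2) (\<alpha>/2) (fst x) * decay_majorant (h\<^sup>2/2) (\<alpha>/2) (snd x)"
    using h assms(1) near by (intro decay_le_majorant_product) auto
  finally show ?thesis .
qed

end

lemma interference_density_origin:
  assumes "0 < h" "ws 0 = 1" "wg 0 = 1"
  shows "interference_density h \<alpha> ws wg (0, 0) = h powr (-\<alpha>)"
  using assms by (simp add: interference_density_def off_axis_angle_def hex_dist_def norm3_def)

lemma continuous_on_interference_density:
  assumes h: "0 < h" and "continuous_on {0..pi/2} ws" "continuous_on {0..pi/2} wg"
  shows "continuous_on UNIV (interference_density h \<alpha> ws wg)"
proof -
  have angle: "continuous_on UNIV (off_axis_angle h)" "off_axis_angle h ` UNIV \<subseteq> {0..pi/2}"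
    using continuous_on_off_axis_angle[OF h] off_axis_angle_range[OF h] by auto
  have "hex_dist h x \<noteq> 0" for x
    using hex_dist_ge[of h x] h by linarith
  then show ?thesis
    unfolding interference_density_def
    by (intro continuous_intros continuous_on_hex_dist
        continuous_on_compose2[OF assms(2) angle] continuous_on_compose2[OF assms(3) angle]) auto
qed

lemma norm3_sreg_hex: "norm3 (sreg h d (2 * m + n) n) = hex_dist h (d * of_int m, d * of_int n)"
proof -
  have "sreg h d (2 * m + n) n = (d * m + d * n / 2, d * n * sqrt 3 / 2, h)"
    by (simp add: sreg_def field_simps)
  then show ?thesis
    by (simp add: hex_dist_def)
qed

lemma bij_betw_hex_lattice: "bij_betw (\<lambda>(m :: int, n :: int). (2 * m + n, n)) (UNIV - {(0, 0)}) Iset"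
proof (rule bij_betw_byWitness[where f' = "\<lambda>(i :: int, j :: int). ((i - j) div 2, j)"])
  show "\<forall>k\<in>UNIV - {(0 :: int, 0 :: int)}. (\<lambda>(i, j). ((i - j) div 2, j)) ((\<lambda>(m, n). (2 * m + n, n)) k) = k"
    by auto
  show "\<forall>k\<in>Iset. (\<lambda>(m, n). (2 * m + n, n)) ((\<lambda>(i, j). ((i - j) div 2, j)) k) = k"
    unfolding Iset_def by (auto; presburger)
  show "(\<lambda>(m, n). (2 * m + n, n)) ` (UNIV - {(0, 0)}) \<subseteq> Iset"
    unfolding Iset_def by (auto; presburger)
  show "(\<lambda>(i, j). ((i - j) div 2, j)) ` Iset \<subseteq> UNIV - {(0 :: int, 0 :: int)}"
    unfolding Iset_def by (auto; presburger)
qed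

lemma interference_sum_eq_lattice_sum:
  "(\<Sum>\<^sub>\<infinity>(i, j)\<in>Iset. norm3 (sreg h d i j) powr (-\<alpha>) * ws (theta_reg h d i j) * wg (theta_reg h d i j))
    = (\<Sum>\<^sub>\<infinity>k. lattice_sample (interference_density h \<alpha> ws wg) d k)"
proof -
  have "(\<Sum>\<^sub>\<infinity>(i, j)\<in>Iset. norm3 (sreg h d i j) powr (-\<alpha>) * ws (theta_reg h d i j) * wg (theta_reg h d i j))
      = (\<Sum>\<^sub>\<infinity>k\<in>UNIV - {(0, 0)}. interference_density h \<alpha> ws wg (d * of_int (fst k), d * of_int (snd k)))"
    by (subst infsum_reindex_bij_betw[OF bij_betw_hex_lattice, symmetric])
       (auto intro!: infsum_cong simp: interference_density_def off_axis_angle_def theta_reg_def norm3_sreg_hex)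
  also have "\<dots> = (\<Sum>\<^sub>\<infinity>k. lattice_sample (interference_density h \<alpha> ws wg) d k)"
    by (intro infsum_cong_neutral) (auto simp: lattice_sample_def)
  finally show ?thesis .
qed

section \<open>The limit of the spectral efficiency\<close>

lemma log_rate_tendsto:
  fixes S :: "real \<Rightarrow> real"
  assumes lim: "((\<lambda>d. d\<^sup>2 * S d) \<longlongrightarrow> I) (at_right 0)"
    and I: "0 < I" and c: "0 < c" and g: "0 < g" and S: "\<And>d. 0 \<le> S d"
  shows "((\<lambda>d. ln (1 + g / (c * S d + 1)) / d\<^sup>2) \<longlongrightarrow> g / (c * I)) (at_right 0)"
proof -
  define u where "u d = g / (c * S d + 1)" for d
  have u_pos: "0 < u d" for d
    using S[of d] c g by (simp add: u_def add_nonneg_pos)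
  have "((\<lambda>d. g / (c * (d\<^sup>2 * S d) + d\<^sup>2)) \<longlongrightarrow> g / (c * I + 0\<^sup>2)) (at_right 0)"
    using I c by (intro tendsto_intros lim) auto
  moreover have "\<forall>\<^sub>F d in at_right 0. g / (c * (d\<^sup>2 * S d) + d\<^sup>2) = u d / d\<^sup>2"
    using eventually_at_right_less[of 0] by eventually_elim (simp add: u_def field_simps)
  ultimately have rate: "((\<lambda>d. u d / d\<^sup>2) \<longlongrightarrow> g / (c * I)) (at_right 0)"
    by (simp add: tendsto_cong)
  have "((\<lambda>d. d\<^sup>2 * (u d / d\<^sup>2)) \<longlongrightarrow> 0\<^sup>2 * (g / (c * I))) (at_right 0)"
    by (intro tendsto_intros rate)
  moreover have "\<forall>\<^sub>F d in at_right 0. d\<^sup>2 * (u d / d\<^sup>2) = u d"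
    using eventually_at_right_less[of 0] by eventually_elim simp
  ultimately have "(u \<longlongrightarrow> 0) (at_right 0)"
    by (simp add: tendsto_cong)
  then have "filterlim u (at 0) (at_right 0)"
  proof (rule filterlim_atI)
    show "\<forall>\<^sub>F d in at_right 0. u d \<noteq> 0"
      using u_pos by (intro always_eventually) (simp add: less_imp_neq[symmetric])
  qed
  then have "((\<lambda>d. ln (1 + u d) / u d) \<longlongrightarrow> 1) (at_right 0)"
    by (rule filterlim_compose[OF lim_ln_1_plus_x_over_x_at_0])
  then have "((\<lambda>d. ln (1 + u d) / u d * (u d / d\<^sup>2)) \<longlongrightarrow> 1 * (g / (c * I))) (at_right 0)"
    by (intro tendsto_intros rate)
  moreover have "ln (1 + u d) / u d * (u d / d\<^sup>2) = ln (1 + u d) / d\<^sup>2" for d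
    using u_pos[of d] by simp
  ultimately show ?thesis
    unfolding u_def[symmetric] by (simp only: mult_1)
qed

theorem proposition3:
  fixes h \<alpha> p \<sigma>2 :: real and ws wg :: "real \<Rightarrow> real"
  assumes "h > 0" and "\<alpha> > 2" and "p > 0" and "\<sigma>2 > 0"
    and "continuous_on {0..pi/2} ws" and "continuous_on {0..pi/2} wg"
    and "\<forall>t\<in>{0..pi/2}. 0 \<le> ws t \<and> ws t \<le> 1"
    and "\<forall>t\<in>{0..pi/2}. 0 \<le> wg t \<and> wg t \<le> 1"
    and "ws 0 = 1" and "wg 0 = 1"
  shows "\<exists>L. 0 < L \<and> ((\<lambda>\<Delta>. R_reg \<sigma>2 h \<alpha> ws wg p \<Delta>) \<longlongrightarrow> L) (at_right 0)"
proof -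
  note h = assms(1) and gains = assms(7,8)
  define \<rho> where "\<rho> = interference_density h \<alpha> ws wg"
  define S where "S \<Delta> = (\<Sum>\<^sub>\<infinity>k. lattice_sample \<rho> \<Delta> k)" for \<Delta>
  define G where "G = decay_majorant (h\<^sup>2/2) (\<alpha>/2)"
  define \<gamma> where "\<gamma> = gamma_snr \<sigma>2 h \<alpha> p"
  have cont: "continuous_on UNIV \<rho>"
    unfolding \<rho>_def using h assms(5,6) by (rule continuous_on_interference_density)
  have nonneg: "0 \<le> \<rho> x" for x
    unfolding \<rho>_def using h gains by (rule interference_density_nonneg)
  have "integrable lborel (\<lambda>x. G (fst x) * G (snd x))"
    unfolding G_def using assms(2) by (intro integrable_lborel_product integrable_decay_majorant) auto
  from riemann_sum_tendsto_integral[OF cont nonneg this]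
  have int: "integrable lborel \<rho>" and riemann: "((\<lambda>\<Delta>. \<Delta>\<^sup>2 * S \<Delta>) \<longlongrightarrow> integral\<^sup>L lborel \<rho>) (at_right 0)"
    unfolding \<rho>_def S_def G_def
    using lattice_sample_interference_le_majorant[OF h gains] assms(2) by auto
  have "0 < integral\<^sup>L lborel \<rho>"
    using integral_pos_if_continuous_at_pos[OF cont nonneg int, of "(0, 0)"] h
    by (simp add: \<rho>_def interference_density_origin assms(9,10))
  moreover have "0 \<le> S \<Delta>" for \<Delta>
    unfolding S_def by (intro infsum_nonneg) (simp add: lattice_sample_def nonneg)
  moreover have "0 < \<gamma>"
    using assms(1,3,4) by (simp add: \<gamma>_def gamma_snr_def)
  ultimately have rate: "((\<lambda>\<Delta>. ln (1 + \<gamma> / (p / \<sigma>2 * S \<Delta> + 1)) / \<Delta>\<^sup>2) \<longlongrightarrow> \<gamma> / (p / \<sigma>2 * integral\<^sup>L lborel \<rho>)) (at_right 0)"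
    using assms(3,4) by (intro log_rate_tendsto[OF riemann]) auto
  have rescale: "2 / (\<Delta>\<^sup>2 * sqrt 3) * (y / ln 2) = 2 / (sqrt 3 * ln 2) * (y / \<Delta>\<^sup>2)" for \<Delta> y :: real
    by (cases "\<Delta> = 0") simp_all
  have "((\<lambda>\<Delta>. R_reg \<sigma>2 h \<alpha> ws wg p \<Delta>) \<longlongrightarrow> 2 / (sqrt 3 * ln 2) * (\<gamma> / (p / \<sigma>2 * integral\<^sup>L lborel \<rho>))) (at_right 0)"
    unfolding R_reg_def eta_int_def interference_sum_eq_lattice_sum \<gamma>_def[symmetric]
      \<rho>_def[symmetric] S_def[symmetric] log_def rescale
    using rate by (rule tendsto_mult_left)
  moreover have "0 < 2 / (sqrt 3 * ln 2) * (\<gamma> / (p / \<sigma>2 * integral\<^sup>L lborel \<rho>))"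
    using \<open>0 < integral\<^sup>L lborel \<rho>\<close> \<open>0 < \<gamma>\<close> assms(3,4) by simp
  ultimately show ?thesis
    by blast
qed

end
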